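(* Let $p_{Y_1,Y_2|X_1,X_2}$ be a discrete memoryless channel and let $(U_{10},U_{11},V_{11},V_{20},V_{22},X_1,X_2)$ be finite-valued random variables with any joint distribution, $(Y_1,Y_2)$ generated through the channel. Let $\mathcal R_{CC}(p)$ be the set of $(R_1,R_2)$ satisfying \begin{align*} R_1 &\le I(Y_1;V_{11},U_{11},V_{20},U_{10}),\\ R_2 &\le I(Y_2;V_{20},V_{22}|U_{10})-I(V_{22},V_{20};U_{11}|U_{10}),\\ R_1+R_2 &\le I(Y_1;V_{11},U_{11}|V_{20},U_{10})+I(Y_2;V_{22},V_{20},U_{10})-I(V_{22};U_{11},V_{11}|V_{20},U_{10}),\\ R_1+R_2 &\le I(Y_1;V_{11},U_{11},V_{20},U_{10})+I(Y_2;V_{22}|V_{20},U_{10})-I(V_{22};U_{11},V_{11}|V_{20},U_{10}),\\ 2R_2+R_1 &\le I(Y_1;V_{11},U_{11},V_{20}|U_{10})+I(Y_2;V_{22}|V_{20},U_{10})+I(Y_2;V_{20},V_{22},U_{10})\\ &\quad -I(V_{22};U_{11},V_{11}|V_{20},U_{10})-I(V_{22},V_{20};U_{11}|U_{10}), \end{align*} and let $\mathcal R_{CC}=\bigcup_p \mathcal R_{CC}(p)$. Let $p'$ be obtained from $p$ by setting $U'_{11}$ constant and $V'_{11}=(V_{11},U_{11})$, all other variables unchanged. Then $\mathcal R_{CC}(p)\subseteq\mathcal R_{CC}(p')$; in particular $\mathcal R_{CC}$ equals the union of $\mathcal R_{CC}(p)$ over distributions in which $U_{11}$ is constant.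
   Context: $\mathcal R_{CC}$ is the achievable rate region of Cao and Chen for the cognitive interference channel, written with index 1 for the primary user and index 2 for the cognitive user; $U_{10},U_{11},V_{11},V_{20},V_{22}$ are auxiliary random variables. All mutual informations are evaluated under the indicated joint distribution. *)

theory Defs
  imports "HOL-Probability.Probability"
begin

definition cmi :: "'w pmf \<Rightarrow> ('w \<Rightarrow> 'a) \<Rightarrow> ('w \<Rightarrow> 'b) \<Rightarrow> ('w \<Rightarrow> 'c) \<Rightarrow> real" where
  "cmi M X Y Z =
     (let J = map_pmf (\<lambda>w. (X w, Y w, Z w)) M;
          JXZ = map_pmf (\<lambda>w. (X w, Z w)) M;
          JYZ = map_pmf (\<lambda>w. (Y w, Z w)) M;
          JZ = map_pmf Z M
      in (\<Sum>(x, y, z) \<in> set_pmf J.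
            pmf J (x, y, z) *
            log 2 (pmf J (x, y, z) * pmf JZ z / (pmf JXZ (x, z) * pmf JYZ (y, z)))))"

definition mi :: "'w pmf \<Rightarrow> ('w \<Rightarrow> 'a) \<Rightarrow> ('w \<Rightarrow> 'b) \<Rightarrow> real" where
  "mi M X Y = cmi M X Y (\<lambda>_. ())"

definition full_dist ::
  "('x1 \<times> 'x2 \<Rightarrow> ('y1 \<times> 'y2) pmf) \<Rightarrow>
   ('u10 \<times> 'u11 \<times> 'v11 \<times> 'v20 \<times> 'v22 \<times> 'x1 \<times> 'x2) pmf \<Rightarrow>
   (('u10 \<times> 'u11 \<times> 'v11 \<times> 'v20 \<times> 'v22 \<times> 'x1 \<times> 'x2) \<times> ('y1 \<times> 'y2)) pmf" where
  "full_dist W P = P \<bind> (\<lambda>a. case a of (u10, u11, v11, v20, v22, x1, x2) \<Rightarrow>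
                             map_pmf (\<lambda>y. (a, y)) (W (x1, x2)))"

definition gU10 where "gU10 w = (case w of ((u10, u11, v11, v20, v22, x1, x2), y1, y2) \<Rightarrow> u10)"
definition gU11 where "gU11 w = (case w of ((u10, u11, v11, v20, v22, x1, x2), y1, y2) \<Rightarrow> u11)"
definition gV11 where "gV11 w = (case w of ((u10, u11, v11, v20, v22, x1, x2), y1, y2) \<Rightarrow> v11)"
definition gV20 where "gV20 w = (case w of ((u10, u11, v11, v20, v22, x1, x2), y1, y2) \<Rightarrow> v20)"
definition gV22 where "gV22 w = (case w of ((u10, u11, v11, v20, v22, x1, x2), y1, y2) \<Rightarrow> v22)"
definition gY1 where "gY1 w = (case w of ((u10, u11, v11, v20, v22, x1, x2), y1, y2) \<Rightarrow> y1)"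
definition gY2 where "gY2 w = (case w of ((u10, u11, v11, v20, v22, x1, x2), y1, y2) \<Rightarrow> y2)"

definition RCC ::
  "('x1::finite \<times> 'x2::finite \<Rightarrow> ('y1::finite \<times> 'y2::finite) pmf) \<Rightarrow>
   ('u10::finite \<times> 'u11::finite \<times> 'v11::finite \<times> 'v20::finite \<times> 'v22::finite \<times> 'x1 \<times> 'x2) pmf \<Rightarrow>
   (real \<times> real) set" where
  "RCC W P =
    (let M = full_dist W P;
         U10 = gU10; U11 = gU11; V11 = gV11; V20 = gV20; V22 = gV22; Y1 = gY1; Y2 = gY2
     in {(R1, R2).
       R1 \<le> mi M Y1 (\<lambda>w. (V11 w, U11 w, V20 w, U10 w)) \<and>
       R2 \<le> cmi M Y2 (\<lambda>w. (V20 w, V22 w)) U10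
             - cmi M (\<lambda>w. (V22 w, V20 w)) U11 U10 \<and>
       R1 + R2 \<le> cmi M Y1 (\<lambda>w. (V11 w, U11 w)) (\<lambda>w. (V20 w, U10 w))
             + mi M Y2 (\<lambda>w. (V22 w, V20 w, U10 w))
             - cmi M V22 (\<lambda>w. (U11 w, V11 w)) (\<lambda>w. (V20 w, U10 w)) \<and>
       R1 + R2 \<le> mi M Y1 (\<lambda>w. (V11 w, U11 w, V20 w, U10 w))
             + cmi M Y2 V22 (\<lambda>w. (V20 w, U10 w))
             - cmi M V22 (\<lambda>w. (U11 w, V11 w)) (\<lambda>w. (V20 w, U10 w)) \<and>
       2 * R2 + R1 \<le> cmi M Y1 (\<lambda>w. (V11 w, U11 w, V20 w)) U10
             + cmi M Y2 V22 (\<lambda>w. (V20 w, U10 w))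
             + mi M Y2 (\<lambda>w. (V20 w, V22 w, U10 w))
             - cmi M V22 (\<lambda>w. (U11 w, V11 w)) (\<lambda>w. (V20 w, U10 w))
             - cmi M (\<lambda>w. (V22 w, V20 w)) U11 U10})"

definition merge_U11 ::
  "('u10 \<times> 'u11 \<times> 'v11 \<times> 'v20 \<times> 'v22 \<times> 'x1 \<times> 'x2) pmf \<Rightarrow>
   ('u10 \<times> unit \<times> ('v11 \<times> 'u11) \<times> 'v20 \<times> 'v22 \<times> 'x1 \<times> 'x2) pmf" where
  "merge_U11 P = map_pmf (\<lambda>(u10, u11, v11, v20, v22, x1, x2).
                            (u10, (), (v11, u11), v20, v22, x1, x2)) P"

end

theory Submission
  imports Defs
begin

(* The map p -> p' replaces (U11, V11) by ((), (V11, U11)); on the full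
   distribution including the channel outputs this is the push-forward under a
   coordinate map phi_merge.  Conditional mutual information is invariant under
   push-forward and under injective relabelling of its three arguments.  Hence every
   information quantity in the definition of R_CC(p') equals the corresponding one
   for p, with a single exception: I(V22,V20;U11'|U10) vanishes because U11' is
   constant, whereas I(V22,V20;U11|U10) >= 0.  This term enters the bounds only with
   a minus sign, so every constraint is relaxed and
   R_CC(p) is contained in R_CC(p'). *)

lemma cmi_map_pmf:
  "cmi (map_pmf \<phi> M) X Y Z = cmi M (\<lambda>w. X (\<phi> w)) (\<lambda>w. Y (\<phi> w)) (\<lambda>w. Z (\<phi> w))"
  unfolding cmi_def by (simp add: pmf.map_comp o_def)

lemma cmi_inj_relabel:
  assumes "inj f" and "inj g" and "inj h"
  shows "cmi M (\<lambda>w. f (X w)) (\<lambda>w. g (Y w)) (\<lambda>w. h (Z w)) = cmi M X Y Z"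
proof -
  define k where "k = (\<lambda>(x, y, z). (f x, g y, h z))"
  have inj_k: "inj k" and inj_xz: "inj (map_prod f h)" and inj_yz: "inj (map_prod g h)"
    using assms unfolding k_def inj_def by auto
  define J where "J = map_pmf (\<lambda>w. (X w, Y w, Z w)) M"
  define XZ where "XZ = map_pmf (\<lambda>w. (X w, Z w)) M"
  define YZ where "YZ = map_pmf (\<lambda>w. (Y w, Z w)) M"
  define ZZ where "ZZ = map_pmf Z M"
  have laws:
    "map_pmf (\<lambda>w. (f (X w), g (Y w), h (Z w))) M = map_pmf k J"
    "map_pmf (\<lambda>w. (f (X w), h (Z w))) M = map_pmf (map_prod f h) XZ"
    "map_pmf (\<lambda>w. (g (Y w), h (Z w))) M = map_pmf (map_prod g h) YZ"
    "map_pmf (\<lambda>w. h (Z w)) M = map_pmf h ZZ"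
    by (simp_all add: J_def XZ_def YZ_def ZZ_def k_def pmf.map_comp o_def)
  have pmf_J: "pmf (map_pmf k J) (f x, g y, h z) = pmf J (x, y, z)" for x y z
    using pmf_map_inj'[OF inj_k, of J "(x, y, z)"] by (simp add: k_def)
  have pmf_XZ: "pmf (map_pmf (map_prod f h) XZ) (f x, h z) = pmf XZ (x, z)" for x z
    using pmf_map_inj'[OF inj_xz, of XZ "(x, z)"] by simp
  have pmf_YZ: "pmf (map_pmf (map_prod g h) YZ) (g y, h z) = pmf YZ (y, z)" for y z
    using pmf_map_inj'[OF inj_yz, of YZ "(y, z)"] by simp
  have pmf_Z: "pmf (map_pmf h ZZ) (h z) = pmf ZZ z" for z
    using pmf_map_inj'[OF assms(3)] by simp
  have "cmi M (\<lambda>w. f (X w)) (\<lambda>w. g (Y w)) (\<lambda>w. h (Z w))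
      = (\<Sum>t\<in>k ` set_pmf J. case t of (x, y, z) \<Rightarrow> pmf (map_pmf k J) (x, y, z) *
           log 2 (pmf (map_pmf k J) (x, y, z) * pmf (map_pmf h ZZ) z /
             (pmf (map_pmf (map_prod f h) XZ) (x, z) * pmf (map_pmf (map_prod g h) YZ) (y, z))))"
    unfolding cmi_def Let_def laws by simp
  also have "\<dots> = cmi M X Y Z"
    unfolding cmi_def Let_def J_def[symmetric] XZ_def[symmetric] YZ_def[symmetric]
      ZZ_def[symmetric]
    by (subst sum.reindex[OF inj_on_subset[OF inj_k]])
       (auto intro!: sum.cong simp: k_def pmf_J[unfolded k_def] pmf_XZ pmf_YZ pmf_Z)
  finally show ?thesis .
qed

lemma cmi_const_right: "cmi M X (\<lambda>_. c) Z = 0"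
proof -
  define XZ where "XZ = map_pmf (\<lambda>w. (X w, Z w)) M"
  define ZZ where "ZZ = map_pmf Z M"
  have inj_J: "inj (\<lambda>(x, z). (x, c, z))" and inj_YZ: "inj (\<lambda>z. (c, z))"
    by (auto simp: inj_def)
  have law_J: "map_pmf (\<lambda>w. (X w, c, Z w)) M = map_pmf (\<lambda>(x, z). (x, c, z)) XZ"
    and law_YZ: "map_pmf (\<lambda>w. (c, Z w)) M = map_pmf (\<lambda>z. (c, z)) ZZ"
    by (simp_all add: XZ_def ZZ_def pmf.map_comp o_def)
  have pmf_J: "pmf (map_pmf (\<lambda>(x, z). (x, c, z)) XZ) (x, c, z) = pmf XZ (x, z)" for x z
    using pmf_map_inj'[OF inj_J, of XZ "(x, z)"] by simp
  have pmf_YZ: "pmf (map_pmf (\<lambda>z. (c, z)) ZZ) (c, z) = pmf ZZ z" for z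
    using pmf_map_inj'[OF inj_YZ] by metis
  text \<open>On the support every logarithm has argument p(x,z) p(z) / (p(x,z) p(z)) = 1.\<close>
  have Z_pos: "pmf ZZ z \<noteq> 0" if "(x, z) \<in> set_pmf XZ" for x z
  proof -
    have "z \<in> set_pmf ZZ" using that by (auto simp: XZ_def ZZ_def)
    then show ?thesis by (simp add: set_pmf_eq')
  qed
  show ?thesis
    unfolding cmi_def Let_def law_J law_YZ XZ_def[symmetric] ZZ_def[symmetric]
    by (rule sum.neutral) (auto simp: pmf_J pmf_YZ dest: Z_pos)
qed

text \<open>The pointwise Gibbs bound p log(p/r) >= (p - r)/ln 2, a consequence of
  ln a >= 1 - 1/a; summing it gives nonnegativity of divergences.\<close>
lemma gibbs_pointwise:
  fixes p r :: real
  assumes "p > 0" and "r > 0"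
  shows "p * log 2 (p / r) \<ge> (p - r) / ln 2"
proof -
  have "ln (r / p) \<le> r / p - 1"
    using assms by (intro ln_le_minus_one) simp
  then have "p * (1 - r / p) \<le> p * ln (p / r)"
    using assms by (intro mult_left_mono) (auto simp: ln_div)
  then have "p - r \<le> p * ln (p / r)"
    using assms by (simp add: algebra_simps)
  then show ?thesis
    by (simp add: log_def divide_right_mono)
qed

lemma sum_pmf_first_coord:
  fixes Q :: "('a::finite \<times> 'c) pmf"
  shows "(\<Sum>x\<in>UNIV. pmf Q (x, z)) = pmf (map_pmf snd Q) z"
proof -
  have fibre: "snd -` {z} = (\<lambda>x. (x, z)) ` UNIV" by force
  have "pmf (map_pmf snd Q) z = measure_pmf.prob Q (snd -` {z})"
    by (simp add: pmf_map)
  also have "\<dots> = (\<Sum>x\<in>UNIV. pmf Q (x, z))"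
    unfolding fibre by (subst measure_measure_pmf_finite) (auto simp: sum.reindex inj_on_def)
  finally show ?thesis by simp
qed

text \<open>The function p(x,z) p(y,z) / p(z), the law under which X and Y are conditionally
  independent given Z, has total mass 1.\<close>
lemma product_of_conditionals_mass:
  fixes M :: "'w pmf"
    and X :: "'w \<Rightarrow> 'a::finite" and Y :: "'w \<Rightarrow> 'b::finite" and Z :: "'w \<Rightarrow> 'c::finite"
  defines "XZ \<equiv> map_pmf (\<lambda>w. (X w, Z w)) M" and "YZ \<equiv> map_pmf (\<lambda>w. (Y w, Z w)) M"
    and "ZZ \<equiv> map_pmf Z M"
  shows "(\<Sum>(x, y, z)\<in>UNIV. pmf XZ (x, z) * pmf YZ (y, z) / pmf ZZ z) = 1"
proof -
  have fibre_mass: "(\<Sum>x\<in>UNIV. \<Sum>y\<in>UNIV. pmf XZ (x, z) * pmf YZ (y, z) / pmf ZZ z) = pmf ZZ z"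
    for z
  proof -
    have X_marg: "(\<Sum>x\<in>UNIV. pmf XZ (x, z)) = pmf ZZ z"
      and Y_marg: "(\<Sum>y\<in>UNIV. pmf YZ (y, z)) = pmf ZZ z"
      unfolding sum_pmf_first_coord XZ_def YZ_def ZZ_def by (simp_all add: pmf.map_comp o_def)
    have "(\<Sum>x\<in>UNIV. \<Sum>y\<in>UNIV. pmf XZ (x, z) * pmf YZ (y, z) / pmf ZZ z)
        = (\<Sum>x\<in>UNIV. pmf XZ (x, z)) * (\<Sum>y\<in>UNIV. pmf YZ (y, z)) / pmf ZZ z"
      by (simp add: sum_product sum_divide_distrib)
    then show ?thesis
      unfolding X_marg Y_marg by (cases "pmf ZZ z = 0") simp_all
  qed
  have "(\<Sum>(x, y, z)\<in>UNIV. pmf XZ (x, z) * pmf YZ (y, z) / pmf ZZ z)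
      = (\<Sum>x\<in>UNIV. \<Sum>y\<in>UNIV. \<Sum>z\<in>UNIV. pmf XZ (x, z) * pmf YZ (y, z) / pmf ZZ z)"
    by (simp add: UNIV_Times_UNIV[symmetric] sum.cartesian_product del: UNIV_Times_UNIV)
  also have "\<dots> = (\<Sum>z\<in>UNIV. \<Sum>x\<in>UNIV. \<Sum>y\<in>UNIV. pmf XZ (x, z) * pmf YZ (y, z) / pmf ZZ z)"
    by (subst sum.swap) (rule sum.cong[OF refl], rule sum.swap)
  also have "\<dots> = (\<Sum>z\<in>UNIV. pmf ZZ z)"
    by (simp add: fibre_mass)
  also have "\<dots> = 1"
    by (rule sum_pmf_eq_1) auto
  finally show ?thesis .
qed

text \<open>Nonnegativity of conditional mutual information for finite-valued variables:
  cmi is the divergence of p(x,y,z) from p(x,z) p(y,z) / p(z).\<close>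
lemma cmi_nonneg:
  fixes X :: "'w \<Rightarrow> 'a::finite" and Y :: "'w \<Rightarrow> 'b::finite" and Z :: "'w \<Rightarrow> 'c::finite"
  shows "cmi M X Y Z \<ge> 0"
proof -
  define J where "J = map_pmf (\<lambda>w. (X w, Y w, Z w)) M"
  define XZ where "XZ = map_pmf (\<lambda>w. (X w, Z w)) M"
  define YZ where "YZ = map_pmf (\<lambda>w. (Y w, Z w)) M"
  define ZZ where "ZZ = map_pmf Z M"
  define q where "q = (\<lambda>(x, y, z). pmf XZ (x, z) * pmf YZ (y, z) / pmf ZZ z)"
  have term_bound: "(case t of (x, y, z) \<Rightarrow> pmf J (x, y, z) *
          log 2 (pmf J (x, y, z) * pmf ZZ z / (pmf XZ (x, z) * pmf YZ (y, z))))
        \<ge> (pmf J t - q t) / ln 2" if "t \<in> set_pmf J" for t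
  proof -
    obtain x y z where t: "t = (x, y, z)" by (cases t)
    have "(x, z) \<in> set_pmf XZ" "(y, z) \<in> set_pmf YZ" "z \<in> set_pmf ZZ"
      using that unfolding t J_def XZ_def YZ_def ZZ_def by auto
    then have pos: "pmf J t > 0" "pmf XZ (x, z) > 0" "pmf YZ (y, z) > 0" "pmf ZZ z > 0"
      using that by (simp_all add: pmf_positive)
    then have "pmf J t * pmf ZZ z / (pmf XZ (x, z) * pmf YZ (y, z)) = pmf J t / q t"
      by (simp add: q_def t field_simps)
    moreover have "q t > 0" using pos by (simp add: q_def t)
    ultimately show ?thesis
      using gibbs_pointwise[of "pmf J t" "q t"] pos by (simp add: t)
  qed
  have q_nonneg: "q t \<ge> 0" for t
    unfolding q_def by (auto simp: case_prod_beta)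
  have "(\<Sum>t\<in>set_pmf J. q t) \<le> (\<Sum>t\<in>UNIV. q t)"
    by (rule sum_mono2) (auto simp: q_nonneg)
  also have "\<dots> = 1"
    unfolding q_def XZ_def YZ_def ZZ_def by (rule product_of_conditionals_mass)
  finally have q_mass: "(\<Sum>t\<in>set_pmf J. q t) \<le> 1" .
  have J_mass: "(\<Sum>t\<in>set_pmf J. pmf J t) = 1"
    by (rule sum_pmf_eq_1) auto
  have "(1 - (\<Sum>t\<in>set_pmf J. q t)) / ln 2 = (\<Sum>t\<in>set_pmf J. (pmf J t - q t) / ln 2)"
    by (simp add: sum_divide_distrib[symmetric] sum_subtractf J_mass)
  also have "\<dots> \<le> cmi M X Y Z"
    unfolding cmi_def Let_def J_def[symmetric] XZ_def[symmetric] YZ_def[symmetric]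
      ZZ_def[symmetric]
    by (rule sum_mono) (rule term_bound)
  finally show ?thesis
    using q_mass by (smt (verit) divide_nonneg_pos ln_gt_zero one_less_numeral_iff)
qed

definition phi_merge ::
  "('u10 \<times> 'u11 \<times> 'v11 \<times> 'v20 \<times> 'v22 \<times> 'x1 \<times> 'x2) \<times> 'y \<Rightarrow>
   ('u10 \<times> unit \<times> ('v11 \<times> 'u11) \<times> 'v20 \<times> 'v22 \<times> 'x1 \<times> 'x2) \<times> 'y" where
  "phi_merge w = (case w of ((u10, u11, v11, v20, v22, x1, x2), y) \<Rightarrow>
      ((u10, (), (v11, u11), v20, v22, x1, x2), y))"

text \<open>The channel acts only on (X1, X2), so merging commutes with adding the outputs.\<close>
lemma full_dist_merge_U11: "full_dist W (merge_U11 P) = map_pmf phi_merge (full_dist W P)"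
  unfolding full_dist_def merge_U11_def
  by (simp add: bind_map_pmf map_bind_pmf pmf.map_comp o_def phi_merge_def split_def)

lemma projections_phi_merge:
  "gU10 (phi_merge w) = gU10 w" "gU11 (phi_merge w) = ()"
  "gV11 (phi_merge w) = (gV11 w, gU11 w)" "gV20 (phi_merge w) = gV20 w"
  "gV22 (phi_merge w) = gV22 w" "gY1 (phi_merge w) = gY1 w" "gY2 (phi_merge w) = gY2 w"
  by (auto simp: phi_merge_def gU10_def gU11_def gV11_def gV20_def gV22_def gY1_def gY2_def
      split: prod.splits)

text \<open>Any quantity in which U11 and V11 only occur together as a pair is unchanged by
  merging; the pair just gets relabelled injectively.\<close>
lemma cmi_merge_relabel:
  assumes "inj f" and "inj g" and "inj h"
    and "\<And>w. X (phi_merge w) = f (X0 w)" "\<And>w. Y (phi_merge w) = g (Y0 w)"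
    and "\<And>w. Z (phi_merge w) = h (Z0 w)"
  shows "cmi (map_pmf phi_merge M) X Y Z = cmi M X0 Y0 Z0"
  unfolding cmi_map_pmf assms(4-6) by (rule cmi_inj_relabel[OF assms(1-3)])

text \<open>Core inclusion: each bound of R_CC(p') is at least the corresponding bound of
  R_CC(p), with equality except for the term I(V22,V20;U11|U10), which drops to 0.\<close>
lemma RCC_subset_merge_U11:
  fixes W :: "'x1::finite \<times> 'x2::finite \<Rightarrow> ('y1::finite \<times> 'y2::finite) pmf"
    and P :: "('u10::finite \<times> 'u11::finite \<times> 'v11::finite \<times> 'v20::finite \<times> 'v22::finite
               \<times> 'x1 \<times> 'x2) pmf"
  shows "RCC W P \<subseteq> RCC W (merge_U11 P)"
proof -
  define M where "M = full_dist W P"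
  note relabel = cmi_merge_relabel[where M = M, OF inj_on_id _ inj_on_id]
  have Y1_all: "mi (map_pmf phi_merge M) gY1 (\<lambda>w. (gV11 w, gU11 w, gV20 w, gU10 w))
      = mi M gY1 (\<lambda>w. (gV11 w, gU11 w, gV20 w, gU10 w))"
    unfolding mi_def
    by (rule relabel[where g = "\<lambda>(a, b, c, d). ((a, b), (), c, d)"])
       (auto simp: inj_def projections_phi_merge)
  have Y1_given_V20_U10:
    "cmi (map_pmf phi_merge M) gY1 (\<lambda>w. (gV11 w, gU11 w)) (\<lambda>w. (gV20 w, gU10 w))
      = cmi M gY1 (\<lambda>w. (gV11 w, gU11 w)) (\<lambda>w. (gV20 w, gU10 w))"
    by (rule relabel[where g = "\<lambda>(a, b). ((a, b), ())"])
       (auto simp: inj_def projections_phi_merge)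
  have Y1_given_U10:
    "cmi (map_pmf phi_merge M) gY1 (\<lambda>w. (gV11 w, gU11 w, gV20 w)) gU10
      = cmi M gY1 (\<lambda>w. (gV11 w, gU11 w, gV20 w)) gU10"
    by (rule relabel[where g = "\<lambda>(a, b, c). ((a, b), (), c)"])
       (auto simp: inj_def projections_phi_merge)
  have V22_cost:
    "cmi (map_pmf phi_merge M) gV22 (\<lambda>w. (gU11 w, gV11 w)) (\<lambda>w. (gV20 w, gU10 w))
      = cmi M gV22 (\<lambda>w. (gU11 w, gV11 w)) (\<lambda>w. (gV20 w, gU10 w))"
    by (rule relabel[where g = "\<lambda>(a, b). ((), (b, a))"])
       (auto simp: inj_def projections_phi_merge)
  have U11_cost_vanishes: "cmi (map_pmf phi_merge M) (\<lambda>w. (gV22 w, gV20 w)) gU11 gU10 = 0"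
    unfolding cmi_map_pmf projections_phi_merge by (rule cmi_const_right)
  have U11_cost_nonneg: "cmi M (\<lambda>w. (gV22 w, gV20 w)) gU11 gU10 \<ge> 0"
    by (rule cmi_nonneg)
  have Y2_terms:
    "cmi (map_pmf phi_merge M) gY2 (\<lambda>w. (gV20 w, gV22 w)) gU10
      = cmi M gY2 (\<lambda>w. (gV20 w, gV22 w)) gU10"
    "mi (map_pmf phi_merge M) gY2 (\<lambda>w. (gV22 w, gV20 w, gU10 w))
      = mi M gY2 (\<lambda>w. (gV22 w, gV20 w, gU10 w))"
    "cmi (map_pmf phi_merge M) gY2 gV22 (\<lambda>w. (gV20 w, gU10 w))
      = cmi M gY2 gV22 (\<lambda>w. (gV20 w, gU10 w))"
    "mi (map_pmf phi_merge M) gY2 (\<lambda>w. (gV20 w, gV22 w, gU10 w))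
      = mi M gY2 (\<lambda>w. (gV20 w, gV22 w, gU10 w))"
    unfolding mi_def cmi_map_pmf projections_phi_merge by simp_all
  show ?thesis
    unfolding RCC_def Let_def full_dist_merge_U11 M_def[symmetric]
      Y1_all Y1_given_V20_U10 Y1_given_U10 V22_cost U11_cost_vanishes Y2_terms
    using U11_cost_nonneg by auto
qed

theorem mainTheorem3:
  fixes W :: "'x1::finite \<times> 'x2::finite \<Rightarrow> ('y1::finite \<times> 'y2::finite) pmf"
    and P :: "('u10::finite \<times> 'u11::finite \<times> 'v11::finite \<times> 'v20::finite \<times> 'v22::finite
               \<times> 'x1 \<times> 'x2) pmf"
  shows "RCC W P \<subseteq> RCC W (merge_U11 P)
    \<and> (\<Union>Q :: ('u10 \<times> 'u11 \<times> 'v11 \<times> 'v20 \<times> 'v22 \<times> 'x1 \<times> 'x2) pmf. RCC W Q)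
        \<subseteq> (\<Union>Q' :: ('u10 \<times> unit \<times> ('v11 \<times> 'u11) \<times> 'v20 \<times> 'v22 \<times> 'x1 \<times> 'x2) pmf. RCC W Q')"
  using RCC_subset_merge_U11[of W] by blast

end
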